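(* Let $\mathbf X$ be a nonempty set, $m\ge1$ an integer and $Y>0$. Consider the protocol in which at each round $n=1,2,\dots$ Reality announces $x_n\in\mathbf X$, Predictor announces $\mu_n\in\mathbb R^m$, and Reality announces $y_n\in YU_m$. Let $F_1,F_2,\dots$ be a sequence of functions $F_i:\mathbf X\to\mathbb R^m$ and let $w_1,w_2,\dots$ be positive weights with $\sum_i w_i=1$. Then there is a strategy for Predictor producing predictions $\mu_n\in YU_m$ that guarantees, for all $N=1,2,\dots$ and all $i=1,2,\dots$, $$\sum_{n=1}^N\|y_n-\mu_n\|^2\le\sum_{n=1}^N\|y_n-F_i(x_n)\|^2+8Y^2\ln\frac1{w_i}.$$
   Context: $\|\cdot\|$ is the Euclidean norm on $\mathbb R^m$ and $U_m=\{v\in\mathbb R^m:\|v\|\le1\}$ is the closed unit ball, so $YU_m$ is the closed ball of radius $Y$ centred at $0$. A strategy for Predictor maps each history $(x_1,y_1,\dots,x_{n-1},y_{n-1},x_n)$ to $\mu_n$; the guarantee must hold for every (possibly adaptive) sequence of moves of Reality. *)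

theory Defs
  imports "HOL-Analysis.Analysis"
begin

end

theory Submission
  imports Defs
begin

(* The Aggregating Algorithm with learning rate \<eta> = 1/(8Y\<^sup>2): expert i carries weight
   w_i exp (-\<eta> L_i), where L_i is its cumulative square loss, and Predictor announces the
   weighted mean of the experts' predictions, after projecting these onto the ball Y U_m
   (which only decreases their losses).  Since all differences y - \<mu> lie in the ball of
   radius 2Y, where z \<mapsto> exp (-\<eta> |z|\<^sup>2) is concave, Jensen's inequality shows that one round
   multiplies the total weight by at most exp (-\<eta> |y_n - \<mu>_n|\<^sup>2).  Hence
   w_i exp (-\<eta> L_i) \<le> total weight \<le> exp (-\<eta> L), and taking logarithms gives
   L \<le> L_i + ln (1/w_i) / \<eta>. *)

lemma mult_exp_neg_sq_mono:
  fixes \<eta> s t :: real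
  assumes "\<eta> > 0" "0 \<le> s" "s \<le> t" "2 * \<eta> * t\<^sup>2 \<le> 1"
  shows "s * exp (- \<eta> * s\<^sup>2) \<le> t * exp (- \<eta> * t\<^sup>2)"
proof (rule DERIV_nonneg_imp_nondecreasing[OF \<open>s \<le> t\<close>])
  fix u assume u: "s \<le> u" "u \<le> t"
  have "u\<^sup>2 \<le> t\<^sup>2"
    using u assms by (intro power_mono) auto
  with assms have "2 * \<eta> * u\<^sup>2 \<le> 1"
    by (smt (verit) mult_left_mono)
  moreover have "((\<lambda>u. u * exp (- \<eta> * u\<^sup>2)) has_real_derivative
      (1 - 2 * \<eta> * u\<^sup>2) * exp (- \<eta> * u\<^sup>2)) (at u)"
    by (rule derivative_eq_intros refl | simp add: algebra_simps power2_eq_square)+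
  ultimately show "\<exists>d. ((\<lambda>u. u * exp (- \<eta> * u\<^sup>2)) has_real_derivative d) (at u) \<and> 0 \<le> d"
    by fastforce
qed

lemma exp_neg_sq_tangent:
  fixes \<eta> s t :: real
  assumes "\<eta> > 0" "0 \<le> s" "0 \<le> t" "2 * \<eta> * s\<^sup>2 \<le> 1" "2 * \<eta> * t\<^sup>2 \<le> 1"
  shows "exp (- \<eta> * t\<^sup>2) \<le> exp (- \<eta> * s\<^sup>2) * (1 + 2 * \<eta> * s * (s - t))"
proof -
  define gap where "gap u = exp (- \<eta> * s\<^sup>2) * (1 + 2 * \<eta> * s * (s - u)) - exp (- \<eta> * u\<^sup>2)" for u
  have gap_deriv: "(gap has_real_derivative
      2 * \<eta> * (u * exp (- \<eta> * u\<^sup>2) - s * exp (- \<eta> * s\<^sup>2))) (at u)" for u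
    unfolding gap_def [abs_def]
    by (rule derivative_eq_intros refl | simp add: algebra_simps)+
  have "gap s \<le> gap t"
  proof (cases "s \<le> t")
    case True
    show ?thesis
    proof (rule DERIV_nonneg_imp_nondecreasing[OF True])
      fix u assume "s \<le> u" "u \<le> t"
      with assms have "2 * \<eta> * u\<^sup>2 \<le> 1"
        by (smt (verit) mult_left_mono power_mono)
      with assms \<open>s \<le> u\<close> have "s * exp (- \<eta> * s\<^sup>2) \<le> u * exp (- \<eta> * u\<^sup>2)"
        by (intro mult_exp_neg_sq_mono)
      with assms gap_deriv show "\<exists>d. (gap has_real_derivative d) (at u) \<and> 0 \<le> d"
        by fastforce
    qed
  next
    case False
    show ?thesis
    proof (rule DERIV_nonpos_imp_nonincreasing[of t s gap])
      show "t \<le> s" using False by simp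
      fix u assume "t \<le> u" "u \<le> s"
      with assms have "u * exp (- \<eta> * u\<^sup>2) \<le> s * exp (- \<eta> * s\<^sup>2)"
        by (intro mult_exp_neg_sq_mono) auto
      with assms gap_deriv show "\<exists>d. (gap has_real_derivative d) (at u) \<and> d \<le> 0"
        by (fastforce intro: mult_nonneg_nonpos)
    qed
  qed
  then show ?thesis
    by (simp add: gap_def)
qed

lemma exp_neg_sq_norm_tangent:
  fixes a b :: "'a::real_inner"
  assumes "\<eta> > 0" "2 * \<eta> * (norm a)\<^sup>2 \<le> 1" "2 * \<eta> * (norm b)\<^sup>2 \<le> 1"
  shows "exp (- \<eta> * (norm b)\<^sup>2) \<le> exp (- \<eta> * (norm a)\<^sup>2) * (1 - 2 * \<eta> * (a \<bullet> (b - a)))"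
proof -
  have "1 + 2 * \<eta> * norm a * (norm a - norm b) \<le> 1 - 2 * \<eta> * (a \<bullet> (b - a))"
    using norm_cauchy_schwarz [of a b] \<open>\<eta> > 0\<close>
    by (simp add: inner_diff_right power2_norm_eq_inner [symmetric] algebra_simps power2_eq_square)
  with exp_neg_sq_tangent [OF assms(1) norm_ge_zero norm_ge_zero assms(2,3)] show ?thesis
    by (smt (verit) exp_gt_zero mult_left_mono)
qed

lemma summable_scaleR_bounded:
  fixes b :: "nat \<Rightarrow> 'a::banach"
  assumes "summable p" "\<And>i. p i \<ge> 0" "\<And>i. norm (b i) \<le> r"
  shows "summable (\<lambda>i. p i *\<^sub>R b i)"
proof (rule summable_norm_cancel, rule summable_norm_comparison_test)
  show "summable (\<lambda>i. p i * r)"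
    using assms(1) by (rule summable_mult2)
  show "\<exists>N. \<forall>i\<ge>N. norm (p i *\<^sub>R b i) \<le> p i * r"
    using assms(2,3) by (auto intro: mult_left_mono)
qed

lemma norm_suminf_scaleR_le:
  fixes b :: "nat \<Rightarrow> 'a::banach"
  assumes "p sums 1" "\<And>i. p i \<ge> 0" "\<And>i. norm (b i) \<le> r"
  shows "norm (\<Sum>i. p i *\<^sub>R b i) \<le> r"
proof -
  have "norm (\<Sum>i. p i *\<^sub>R b i) \<le> (\<Sum>i. p i * r)"
    using assms summable_mult2 [OF sums_summable [OF assms(1)]]
    by (intro norm_suminf_le) (auto intro: mult_left_mono)
  also have "\<dots> = r"
    using sums_unique [OF sums_mult2 [OF assms(1), of r]] by simp
  finally show ?thesis .
qed

text \<open>Jensen's inequality for the function \<open>z \<mapsto> exp (- \<eta> * \<parallel>z\<parallel>\<^sup>2)\<close>, which is concave on the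
  ball of radius \<open>r\<close> when \<open>2 * \<eta> * r\<^sup>2 \<le> 1\<close>: sum the tangent inequality at the mean.\<close>

lemma suminf_exp_neg_sq_norm_le:
  fixes b :: "nat \<Rightarrow> 'a::{real_inner,banach}"
  assumes "\<eta> > 0" "2 * \<eta> * r\<^sup>2 \<le> 1" "p sums 1" "\<And>i. p i \<ge> 0" "\<And>i. norm (b i) \<le> r"
  shows "(\<Sum>i. p i * exp (- \<eta> * (norm (b i))\<^sup>2)) \<le> exp (- \<eta> * (norm (\<Sum>i. p i *\<^sub>R b i))\<^sup>2)"
proof -
  define a where "a = (\<Sum>i. p i *\<^sub>R b i)"
  define fa where "fa = exp (- \<eta> * (norm a)\<^sup>2)"
  have a_small: "norm a \<le> r"
    unfolding a_def using assms(3-5) by (rule norm_suminf_scaleR_le)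
  have small: "2 * \<eta> * (norm z)\<^sup>2 \<le> 1" if "norm z \<le> r" for z
    using that assms(1,2) by (smt (verit) mult_left_mono norm_ge_zero power_mono)
  have p_summable: "summable p"
    using assms(3) by (rule sums_summable)
  have mean: "(\<lambda>i. p i *\<^sub>R b i) sums a"
    unfolding a_def using summable_scaleR_bounded [OF p_summable assms(4,5)] by (rule summable_sums)
  have "(\<lambda>i. p i *\<^sub>R b i - p i *\<^sub>R a) sums (a - 1 *\<^sub>R a)"
    by (intro sums_diff mean sums_scaleR_left assms(3))
  then have "(\<lambda>i. a \<bullet> (p i *\<^sub>R b i - p i *\<^sub>R a)) sums 0"
    using bounded_linear.sums [OF bounded_linear_inner_right] by fastforce
  then have tangent_sums: "(\<lambda>i. fa * (p i - 2 * \<eta> * (a \<bullet> (p i *\<^sub>R b i - p i *\<^sub>R a)))) sums fa"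
    using sums_mult [OF sums_diff [OF assms(3) sums_mult]] by fastforce
  have tangent: "p i * exp (- \<eta> * (norm (b i))\<^sup>2) \<le> fa * (p i - 2 * \<eta> * (a \<bullet> (p i *\<^sub>R b i - p i *\<^sub>R a)))" for i
  proof -
    have "p i * exp (- \<eta> * (norm (b i))\<^sup>2) \<le> p i * (fa * (1 - 2 * \<eta> * (a \<bullet> (b i - a))))"
      unfolding fa_def
      using exp_neg_sq_norm_tangent [OF assms(1) small [OF a_small] small [OF assms(5)]] assms(4)
      by (intro mult_left_mono)
    also have "\<dots> = fa * (p i - 2 * \<eta> * (a \<bullet> (p i *\<^sub>R b i - p i *\<^sub>R a)))"
      by (simp add: inner_diff_right algebra_simps)
    finally show ?thesis .
  qed
  have "summable (\<lambda>i. p i * exp (- \<eta> * (norm (b i))\<^sup>2))"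
  proof (rule summable_comparison_test' [OF p_summable, of 0])
    fix i
    have "exp (- \<eta> * (norm (b i))\<^sup>2) \<le> 1"
      using assms(1) by simp
    then show "norm (p i * exp (- \<eta> * (norm (b i))\<^sup>2)) \<le> p i"
      using assms(4) [of i] by (simp add: mult_left_le)
  qed
  then have "(\<Sum>i. p i * exp (- \<eta> * (norm (b i))\<^sup>2)) \<le> fa"
    using sums_le [OF tangent _ tangent_sums] summable_sums by blast
  then show ?thesis
    by (simp add: fa_def a_def)
qed

abbreviation history :: "(nat \<Rightarrow> 'x) \<Rightarrow> (nat \<Rightarrow> 'a) \<Rightarrow> nat \<Rightarrow> ('x \<times> 'a) list" where
  "history x y n \<equiv> map (\<lambda>k. (x k, y k)) [1..<n]"

locale aggregating_algorithm =
  fixes Y :: real and w :: "nat \<Rightarrow> real" and F :: "nat \<Rightarrow> 'x \<Rightarrow> 'a::euclidean_space"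
  assumes Y_pos: "Y > 0" and w_pos: "\<And>i. w i > 0" and w_sums: "w sums 1"
begin

text \<open>The largest learning rate for which \<open>z \<mapsto> exp (- \<eta> * \<parallel>z\<parallel>\<^sup>2)\<close> is concave on the ball of
  radius \<open>2 * Y\<close>, which contains every difference between an outcome and a prediction.\<close>

definition \<eta> :: real where
  "\<eta> = 1 / (8 * Y\<^sup>2)"

definition expert :: "nat \<Rightarrow> 'x \<Rightarrow> 'a" where
  "expert i x = closest_point (cball 0 Y) (F i x)"

definition expert_loss :: "nat \<Rightarrow> ('x \<times> 'a) list \<Rightarrow> real" where
  "expert_loss i h = (\<Sum>(x, y)\<leftarrow>h. (norm (y - expert i x))\<^sup>2)"

definition weight :: "('x \<times> 'a) list \<Rightarrow> nat \<Rightarrow> real" where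
  "weight h i = w i * exp (- \<eta> * expert_loss i h)"

definition total_weight :: "('x \<times> 'a) list \<Rightarrow> real" where
  "total_weight h = (\<Sum>i. weight h i)"

definition prediction :: "('x \<times> 'a) list \<Rightarrow> 'x \<Rightarrow> 'a" where
  "prediction h x = (\<Sum>i. (weight h i / total_weight h) *\<^sub>R expert i x)"

lemma \<eta>_pos: "\<eta> > 0"
  using Y_pos by (simp add: \<eta>_def)

lemma norm_expert_le: "norm (expert i x) \<le> Y"
  using closest_point_in_set [of "cball 0 Y"] Y_pos by (simp add: expert_def)

lemma norm_diff_expert_le:
  assumes "norm y \<le> Y"
  shows "norm (y - expert i x) \<le> norm (y - F i x)"
  using closest_point_lipschitz [of "cball (0::'a) Y" y "F i x"] closest_point_self [of y "cball 0 Y"]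
    assms Y_pos by (simp add: expert_def dist_norm)

lemma expert_loss_nonneg: "expert_loss i h \<ge> 0"
  unfolding expert_loss_def by (induction h) auto

lemma expert_loss_snoc: "expert_loss i (h @ [(x, y)]) = expert_loss i h + (norm (y - expert i x))\<^sup>2"
  by (simp add: expert_loss_def)

lemma weight_pos: "weight h i > 0"
  using w_pos by (simp add: weight_def)

lemma weight_le: "weight h i \<le> w i"
  using w_pos [of i] \<eta>_pos expert_loss_nonneg [of i h] by (simp add: weight_def mult_left_le)

lemma weight_Nil: "weight [] = w"
  by (simp add: fun_eq_iff weight_def expert_loss_def)

lemma weight_snoc: "weight (h @ [(x, y)]) i = weight h i * exp (- \<eta> * (norm (y - expert i x))\<^sup>2)"
  by (simp add: weight_def expert_loss_snoc algebra_simps exp_add [symmetric])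

lemma weight_sums: "weight h sums total_weight h"
proof -
  have "summable (weight h)"
    by (rule summable_comparison_test' [OF sums_summable [OF w_sums], of 0])
      (simp add: weight_le less_imp_le [OF weight_pos])
  then show ?thesis
    by (simp add: total_weight_def summable_sums)
qed

lemma total_weight_pos: "total_weight h > 0"
  using weight_sums sums_unique suminf_pos weight_pos by (metis sums_summable)

lemma weight_le_total_weight: "weight h i \<le> total_weight h"
  using sum_le_suminf [OF sums_summable [OF weight_sums], of "{i}"] weight_pos
  by (simp add: total_weight_def less_imp_le)

lemma total_weight_Nil: "total_weight [] = 1"
  using w_sums by (simp add: total_weight_def weight_Nil sums_iff)

lemma posterior_sums: "(\<lambda>i. weight h i / total_weight h) sums 1"
  using sums_divide [OF weight_sums [of h], where c = "total_weight h"] total_weight_pos [of h] by simp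

lemma norm_prediction_le: "norm (prediction h x) \<le> Y"
  unfolding prediction_def
  by (rule norm_suminf_scaleR_le [OF posterior_sums])
    (simp_all add: norm_expert_le less_imp_le weight_pos total_weight_pos)

lemma total_weight_snoc_le:
  assumes "norm y \<le> Y"
  shows "total_weight (h @ [(x, y)]) \<le> total_weight h * exp (- \<eta> * (norm (y - prediction h x))\<^sup>2)"
proof -
  define p where "p i = weight h i / total_weight h" for i
  have p_sums: "p sums 1" and p_nonneg: "p i \<ge> 0" for i
    using posterior_sums weight_pos [of h i] total_weight_pos [of h] by (simp_all add: p_def [abs_def])
  have diff_le: "norm (expert i x - y) \<le> 2 * Y" for i
    using norm_triangle_ineq4 [of "expert i x" y] norm_expert_le [of i x] assms by linarith
  have "(\<lambda>i. p i *\<^sub>R expert i x) sums prediction h x"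
    using summable_scaleR_bounded [OF sums_summable [OF p_sums] p_nonneg norm_expert_le]
    by (simp add: prediction_def p_def summable_sums)
  from sums_diff [OF this sums_scaleR_left [OF p_sums, of y]]
  have mean: "(\<Sum>i. p i *\<^sub>R (expert i x - y)) = prediction h x - y"
    by (simp add: sums_iff scaleR_diff_right)
  have "(\<lambda>i. p i * exp (- \<eta> * (norm (expert i x - y))\<^sup>2))
      sums (total_weight (h @ [(x, y)]) / total_weight h)"
    using sums_divide [OF weight_sums [of "h @ [(x, y)]"], where c = "total_weight h"]
    by (simp add: weight_snoc p_def norm_minus_commute)
  moreover have "(\<Sum>i. p i * exp (- \<eta> * (norm (expert i x - y))\<^sup>2))
      \<le> exp (- \<eta> * (norm (prediction h x - y))\<^sup>2)"
    unfolding mean [symmetric]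
    by (rule suminf_exp_neg_sq_norm_le [where r = "2 * Y"])
      (use \<eta>_pos Y_pos p_sums p_nonneg diff_le in \<open>simp_all add: \<eta>_def power2_eq_square\<close>)
  ultimately show ?thesis
    using total_weight_pos [of h] by (simp add: sums_iff divide_le_eq norm_minus_commute mult.commute)
qed

lemma total_weight_history_le:
  assumes "\<forall>n\<ge>1. norm (y n) \<le> Y"
  shows "total_weight (history x y (Suc N))
    \<le> exp (- \<eta> * (\<Sum>n=1..N. (norm (y n - prediction (history x y n) (x n)))\<^sup>2))"
proof (induction N)
  case 0
  show ?case
    by (simp add: total_weight_Nil)
next
  case (Suc N)
  have "total_weight (history x y (Suc (Suc N)))
      = total_weight (history x y (Suc N) @ [(x (Suc N), y (Suc N))])"
    by simp
  also have "\<dots> \<le> total_weight (history x y (Suc N))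
      * exp (- \<eta> * (norm (y (Suc N) - prediction (history x y (Suc N)) (x (Suc N))))\<^sup>2)"
    using assms by (intro total_weight_snoc_le) simp
  also have "\<dots> \<le> exp (- \<eta> * (\<Sum>n=1..N. (norm (y n - prediction (history x y n) (x n)))\<^sup>2))
      * exp (- \<eta> * (norm (y (Suc N) - prediction (history x y (Suc N)) (x (Suc N))))\<^sup>2)"
    using Suc.IH by (intro mult_right_mono) auto
  also have "\<dots> = exp (- \<eta> * (\<Sum>n=1..Suc N. (norm (y n - prediction (history x y n) (x n)))\<^sup>2))"
    by (simp add: exp_add [symmetric] algebra_simps)
  finally show ?case .
qed

lemma expert_loss_history_le:
  assumes "\<forall>n\<ge>1. norm (y n) \<le> Y"
  shows "expert_loss i (history x y (Suc N)) \<le> (\<Sum>n=1..N. (norm (y n - F i (x n)))\<^sup>2)"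
proof -
  have "expert_loss i (history x y (Suc N)) = (\<Sum>n=1..N. (norm (y n - expert i (x n)))\<^sup>2)"
    by (simp add: expert_loss_def interv_sum_list_conv_sum_set_nat atLeastLessThanSuc_atLeastAtMost
        comp_def del: upt_Suc)
  also have "\<dots> \<le> (\<Sum>n=1..N. (norm (y n - F i (x n)))\<^sup>2)"
    using assms norm_diff_expert_le by (intro sum_mono power_mono) auto
  finally show ?thesis .
qed

theorem regret_bound:
  assumes "\<forall>n\<ge>1. norm (y n) \<le> Y"
  shows "(\<Sum>n=1..N. (norm (y n - prediction (history x y n) (x n)))\<^sup>2)
    \<le> (\<Sum>n=1..N. (norm (y n - F i (x n)))\<^sup>2) + 8 * Y\<^sup>2 * ln (1 / w i)"
proof -
  let ?h = "history x y (Suc N)"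
  let ?L = "\<Sum>n=1..N. (norm (y n - prediction (history x y n) (x n)))\<^sup>2"
  have "w i * exp (- \<eta> * expert_loss i ?h) \<le> exp (- \<eta> * ?L)"
    using weight_le_total_weight [of ?h i] total_weight_history_le [OF assms, of x N]
    by (simp add: weight_def del: upt_Suc)
  then have "ln (w i * exp (- \<eta> * expert_loss i ?h)) \<le> ln (exp (- \<eta> * ?L))"
    using w_pos [of i] by (subst ln_le_cancel_iff) auto
  then have "ln (w i) - \<eta> * expert_loss i ?h \<le> - \<eta> * ?L"
    using w_pos [of i] by (simp add: ln_mult del: upt_Suc)
  then have "?L \<le> expert_loss i ?h + ln (1 / w i) / \<eta>"
    using \<eta>_pos w_pos [of i] by (simp add: ln_div field_simps del: upt_Suc)
  then show ?thesis
    using expert_loss_history_le [OF assms, of i x N] by (simp add: \<eta>_def mult.commute del: upt_Suc)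
qed

end

theorem lemma1:
  fixes Y :: real
    and F :: "nat \<Rightarrow> 'x \<Rightarrow> real ^ 'm"
    and w :: "nat \<Rightarrow> real"
  assumes "Y > 0"
    and "\<forall>i. w i > 0"
    and "w sums 1"
  shows "\<exists>S :: ('x \<times> (real ^ 'm)) list \<Rightarrow> 'x \<Rightarrow> real ^ 'm.
           \<forall>(x :: nat \<Rightarrow> 'x) (y :: nat \<Rightarrow> real ^ 'm).
             (\<forall>n\<ge>1. norm (y n) \<le> Y) \<longrightarrow>
             (\<forall>n\<ge>1. norm (S (map (\<lambda>k. (x k, y k)) [1..<n]) (x n)) \<le> Y) \<and>
             (\<forall>N\<ge>1. \<forall>i.
                (\<Sum>n=1..N. (norm (y n - S (map (\<lambda>k. (x k, y k)) [1..<n]) (x n)))\<^sup>2)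
                \<le> (\<Sum>n=1..N. (norm (y n - F i (x n)))\<^sup>2) + 8 * Y\<^sup>2 * ln (1 / w i))"
proof -
  interpret aggregating_algorithm Y w F
    using assms by unfold_locales auto
  show ?thesis
    using norm_prediction_le regret_bound by (intro exI [of _ prediction]) blast
qed

end
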